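(* Let $\phi:V\to V$ be a continuous coherency preserver that is not degenerate. Then the map $\Phi:V\times\mathcal{Q}\to\mathcal{Q}$, $(a,p)\mapsto\varphi_a(p)$, is continuous.
   Context: Fix an integer $n\ge4$, let $V=\mathbb{R}^n$ with its standard topology and $q(x_1,\dots,x_n)=x_n^2-\sum_{k=1}^{n-1}x_k^2$. Points $x,y$ are coherent when $q(x-y)=0$; $\mathcal{C}(a)=\{m: q(m-a)=0\}$. A coherency preserver is a map $\phi:V\to V$ with $q(b-a)=0\Rightarrow q(\phi(b)-\phi(a))=0$; it is degenerate when its range is included in some $\mathcal{C}(c)$. Let $\mathcal{Q}=\{(x_1,\dots,x_{n-1},1): \sum_{k=1}^{n-1}x_k^2=1\}$ (with the subspace topology). For a non-degenerate continuous coherency preserver $\phi$, for every $a\in V$ and $p\in\mathcal{Q}$ there is a unique $p'\in\mathcal{Q}$ with $\phi(a+\mathbb{R}p)\subset\phi(a)+\mathbb{R}p'$; one sets $\varphi_a(p):=p'$, which defines $\varphi_a:\mathcal{Q}\to\mathcal{Q}$. *)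

theory Defs
  imports "HOL-Analysis.Analysis"
begin

text \<open>V = real^'n; the distinguished coordinate e plays the role of x_n
  (the remaining coordinates are x_1,...,x_{n-1}).\<close>

definition qf :: "'n::finite \<Rightarrow> real^'n \<Rightarrow> real" where
  "qf e x = (x $ e)^2 - (\<Sum>k\<in>UNIV - {e}. (x $ k)^2)"

definition coherent :: "'n::finite \<Rightarrow> real^'n \<Rightarrow> real^'n \<Rightarrow> bool" where
  "coherent e x y \<longleftrightarrow> qf e (x - y) = 0"

definition lightcone :: "'n::finite \<Rightarrow> real^'n \<Rightarrow> (real^'n) set" where
  "lightcone e a = {m. qf e (m - a) = 0}"

definition coherency_preserver :: "'n::finite \<Rightarrow> (real^'n \<Rightarrow> real^'n) \<Rightarrow> bool" where
  "coherency_preserver e \<phi> \<longleftrightarrow>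
     (\<forall>a b. qf e (b - a) = 0 \<longrightarrow> qf e (\<phi> b - \<phi> a) = 0)"

definition degenerate :: "'n::finite \<Rightarrow> (real^'n \<Rightarrow> real^'n) \<Rightarrow> bool" where
  "degenerate e \<phi> \<longleftrightarrow> (\<exists>c. range \<phi> \<subseteq> lightcone e c)"

definition Qset :: "'n::finite \<Rightarrow> (real^'n) set" where
  "Qset e = {x. x $ e = 1 \<and> (\<Sum>k\<in>UNIV - {e}. (x $ k)^2) = 1}"

definition varphi :: "'n::finite \<Rightarrow> (real^'n \<Rightarrow> real^'n) \<Rightarrow> real^'n \<Rightarrow> real^'n \<Rightarrow> real^'n" where
  "varphi e \<phi> a p = (THE p'. p' \<in> Qset e \<and>
      \<phi> ` {a + t *\<^sub>R p | t. True} \<subseteq> {\<phi> a + s *\<^sub>R p' | s. True})"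

end

theory Submission
  imports Defs
begin

text \<open>The line \<open>a + \<real>p\<close> is null, so by coherency
  its image lies in the light cones of \<open>\<phi> a\<close> and of one another; two null vectors with null
  difference are parallel, hence the whole image lies on one null line through \<open>\<phi> a\<close>. The
  image is not a single point: otherwise every \<open>x\<close> off a hyperplane, being coherent with
  some point of the line, would be mapped into the light cone of \<open>\<phi> a\<close>, and by density
  and continuity all of \<open>V\<close> would, contradicting non-degeneracy. So for some \<open>t\<close> the
  secant \<open>\<phi>(a + t p) - \<phi> a\<close> is a nonzero null vector, and \<open>\<phi>\<^sub>a(p)\<close> is this secant
  rescaled to time component 1. This expression is continuous in \<open>(a, p)\<close> and stays valid
  for the same \<open>t\<close> near \<open>(a, p)\<close>. Nothing here depends on the dimension.\<close>

definition lorentz_dual :: "'n::finite \<Rightarrow> real^'n \<Rightarrow> real^'n" where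
  "lorentz_dual e v = (\<chi> k. if k = e then v $ k else - v $ k)"

definition time_normalize :: "'n::finite \<Rightarrow> real^'n \<Rightarrow> real^'n" where
  "time_normalize e w = (1 / w $ e) *\<^sub>R w"

lemma inner_lorentz_dual:
  "u \<bullet> lorentz_dual e v = u $ e * v $ e - (\<Sum>k\<in>UNIV - {e}. u $ k * v $ k)"
proof -
  have "u \<bullet> lorentz_dual e v = (\<Sum>k\<in>UNIV. if k = e then u $ k * v $ k else - (u $ k * v $ k))"
    by (auto simp: inner_vec_def lorentz_dual_def intro!: sum.cong)
  also have "\<dots> = u $ e * v $ e - (\<Sum>k\<in>UNIV - {e}. u $ k * v $ k)"
    by (simp add: sum.remove[of UNIV e] sum_negf)
  finally show ?thesis .
qed

lemma inner_lorentz_dual_commute: "u \<bullet> lorentz_dual e v = v \<bullet> lorentz_dual e u"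
  by (simp add: inner_lorentz_dual mult.commute)

lemma lorentz_dual_add: "lorentz_dual e (u + v) = lorentz_dual e u + lorentz_dual e v"
  by (simp add: lorentz_dual_def vec_eq_iff)

lemma lorentz_dual_scaleR: "lorentz_dual e (t *\<^sub>R v) = t *\<^sub>R lorentz_dual e v"
  by (simp add: lorentz_dual_def vec_eq_iff)

lemma qf_eq_inner: "qf e u = u \<bullet> lorentz_dual e u"
  by (simp add: qf_def inner_lorentz_dual power2_eq_square)

lemma qf_add_scaleR:
  "qf e (u + t *\<^sub>R v) = qf e u + 2 * t * (u \<bullet> lorentz_dual e v) + t\<^sup>2 * qf e v"
  unfolding qf_eq_inner lorentz_dual_add lorentz_dual_scaleR
  by (simp add: inner_add inner_lorentz_dual_commute[of v e u] power2_eq_square algebra_simps)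

lemma qf_scaleR: "qf e (t *\<^sub>R v) = t\<^sup>2 * qf e v"
  using qf_add_scaleR[of e 0 t v] by (simp add: qf_eq_inner)

lemma qf_minus_commute: "qf e (u - v) = qf e (v - u)"
  using qf_scaleR[of e "-1" "u - v"] by simp

lemma qf_eq_0_time_component_0:
  assumes "qf e w = 0" and "w $ e = 0"
  shows "w = 0"
proof -
  have "(\<Sum>k\<in>UNIV - {e}. (w $ k)\<^sup>2) = 0"
    using assms by (simp add: qf_def)
  then have "\<forall>k\<in>UNIV - {e}. w $ k = 0"
    by (simp add: sum_nonneg_eq_0_iff)
  with assms(2) show ?thesis
    by (auto simp: vec_eq_iff)
qed

text \<open>The combination \<open>v\<^sub>e u - u\<^sub>e v\<close> has time component 0 and is null, since \<open>u\<close>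
  and \<open>v\<close> are orthogonal by polarization.\<close>
lemma null_vectors_parallel:
  assumes u: "qf e u = 0" and v: "qf e v = 0" and uv: "qf e (u - v) = 0"
  shows "v $ e *\<^sub>R u = u $ e *\<^sub>R v"
proof -
  have orth: "u \<bullet> lorentz_dual e v = 0"
    using qf_add_scaleR[of e u "-1" v] u v uv by simp
  have "qf e (v $ e *\<^sub>R u + (- u $ e) *\<^sub>R v) = 0"
    unfolding qf_add_scaleR using u v orth
    by (simp add: qf_scaleR lorentz_dual_scaleR)
  then have "v $ e *\<^sub>R u + (- u $ e) *\<^sub>R v = 0"
    by (rule qf_eq_0_time_component_0) (simp add: mult.commute)
  then show ?thesis
    by (simp add: algebra_simps)
qed

lemma Qset_iff: "x \<in> Qset e \<longleftrightarrow> x $ e = 1 \<and> qf e x = 0"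
  by (auto simp: Qset_def qf_def)

lemma time_normalize_in_Qset:
  assumes "qf e w = 0" and "w \<noteq> 0"
  shows "w $ e \<noteq> 0" and "time_normalize e w \<in> Qset e"
proof -
  show "w $ e \<noteq> 0"
    using assms qf_eq_0_time_component_0 by blast
  then show "time_normalize e w \<in> Qset e"
    using assms(1) by (simp add: Qset_iff time_normalize_def qf_scaleR)
qed

lemma coherent_on_null_line:
  assumes "coherency_preserver e \<phi>" and "qf e p = 0"
  shows "qf e (\<phi> (a + s *\<^sub>R p) - \<phi> (a + r *\<^sub>R p)) = 0"
proof -
  have "(a + s *\<^sub>R p) - (a + r *\<^sub>R p) = (s - r) *\<^sub>R p"
    by (simp add: algebra_simps)
  then show ?thesis
    using assms by (simp add: coherency_preserver_def qf_scaleR)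
qed

lemma null_secant_time_component_nonzero:
  assumes "coherency_preserver e \<phi>" and "qf e p = 0" and "\<phi> (a + t *\<^sub>R p) \<noteq> \<phi> a"
  shows "(\<phi> (a + t *\<^sub>R p) - \<phi> a) $ e \<noteq> 0"
  using coherent_on_null_line[OF assms(1,2), of a t 0] assms(3) qf_eq_0_time_component_0
  by fastforce

text \<open>A point \<open>x\<close> off the null hyperplane through \<open>a\<close> with normal \<open>p\<close> is coherent with the
  point of \<open>a + \<real>p\<close> at the root of a linear equation.\<close>
lemma null_line_meets_lightcone:
  assumes "qf e p = 0" and "(a - x) \<bullet> lorentz_dual e p \<noteq> 0"
  obtains t where "qf e (a + t *\<^sub>R p - x) = 0"
proof
  define t where "t = - qf e (a - x) / (2 * ((a - x) \<bullet> lorentz_dual e p))"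
  have "a + t *\<^sub>R p - x = (a - x) + t *\<^sub>R p"
    by simp
  also have "qf e \<dots> = 0"
    unfolding qf_add_scaleR using assms by (simp add: t_def)
  finally show "qf e (a + t *\<^sub>R p - x) = 0" .
qed

lemma closure_off_null_hyperplane:
  assumes "p \<in> Qset e"
  shows "closure {x. (a - x) \<bullet> lorentz_dual e p \<noteq> 0} = UNIV"
proof -
  have "lorentz_dual e p \<noteq> 0"
    using assms by (auto simp: Qset_iff lorentz_dual_def vec_eq_iff)
  moreover have "{x. (a - x) \<bullet> lorentz_dual e p \<noteq> 0}
      = - {x. lorentz_dual e p \<bullet> x = lorentz_dual e p \<bullet> a}"
    by (auto simp: inner_diff_left inner_commute)
  ultimately show ?thesis
    by (simp add: closure_complement)
qed

lemma nonconstant_on_null_line: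
  assumes cont: "continuous_on UNIV \<phi>"
    and pres: "coherency_preserver e \<phi>"
    and nondeg: "\<not> degenerate e \<phi>"
    and p: "p \<in> Qset e"
  obtains t where "\<phi> (a + t *\<^sub>R p) \<noteq> \<phi> a"
proof (rule ccontr)
  assume "\<not> thesis"
  with that have const: "\<And>t. \<phi> (a + t *\<^sub>R p) = \<phi> a"
    by blast
  have qp: "qf e p = 0"
    using p by (simp add: Qset_iff)
  let ?Z = "{x. qf e (\<phi> x - \<phi> a) = 0}"
  have "{x. (a - x) \<bullet> lorentz_dual e p \<noteq> 0} \<subseteq> ?Z"
  proof
    fix x
    assume "x \<in> {x. (a - x) \<bullet> lorentz_dual e p \<noteq> 0}"
    then obtain t where "qf e (a + t *\<^sub>R p - x) = 0"
      using null_line_meets_lightcone[OF qp] by blast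
    then have "qf e (\<phi> (a + t *\<^sub>R p) - \<phi> x) = 0"
      using pres by (simp add: coherency_preserver_def)
    then show "x \<in> ?Z"
      by (simp add: const qf_minus_commute)
  qed
  moreover have "closed ?Z"
    unfolding qf_def
    by (intro closed_Collect_eq continuous_intros continuous_on_subset[OF cont]) auto
  ultimately have "?Z = UNIV"
    using closure_off_null_hyperplane[OF p, of a] closure_minimal by blast
  then have "range \<phi> \<subseteq> lightcone e (\<phi> a)"
    by (auto simp: lightcone_def)
  with nondeg show False
    by (auto simp: degenerate_def)
qed

lemma varphi_eq_time_normalize:
  assumes pres: "coherency_preserver e \<phi>"
    and p: "p \<in> Qset e"
    and w: "w = \<phi> (a + t *\<^sub>R p) - \<phi> a" and "w \<noteq> 0"
  shows "varphi e \<phi> a p = time_normalize e w"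
proof -
  have qp: "qf e p = 0"
    using p by (simp add: Qset_iff)
  have qw: "qf e w = 0"
    using coherent_on_null_line[OF pres qp, of a t 0] by (simp add: w)
  have we: "w $ e \<noteq> 0" and wQ: "time_normalize e w \<in> Qset e"
    using time_normalize_in_Qset[OF qw \<open>w \<noteq> 0\<close>] by auto
  have on_line: "\<phi> (a + s *\<^sub>R p) = \<phi> a + (v $ e) *\<^sub>R time_normalize e w"
    if v: "v = \<phi> (a + s *\<^sub>R p) - \<phi> a" for s v
  proof -
    have "qf e v = 0" and "qf e (w - v) = 0"
      using coherent_on_null_line[OF pres qp, of a s 0] coherent_on_null_line[OF pres qp, of a t s]
      by (simp_all add: v w)
    then have "v $ e *\<^sub>R w = w $ e *\<^sub>R v"
      using null_vectors_parallel qw by blast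
    then have "v = (1 / w $ e) *\<^sub>R (v $ e *\<^sub>R w)"
      using we by simp
    then have "v = (v $ e) *\<^sub>R time_normalize e w"
      by (simp add: time_normalize_def)
    then show ?thesis
      by (simp add: v algebra_simps)
  qed
  show ?thesis
    unfolding varphi_def
  proof (rule the_equality)
    show "time_normalize e w \<in> Qset e \<and>
        \<phi> ` {a + t *\<^sub>R p | t. True} \<subseteq> {\<phi> a + s *\<^sub>R time_normalize e w | s. True}"
      using wQ on_line by blast
  next
    fix p'
    assume "p' \<in> Qset e \<and> \<phi> ` {a + t *\<^sub>R p | t. True} \<subseteq> {\<phi> a + s *\<^sub>R p' | s. True}"
    then obtain s where "p' $ e = 1" and "\<phi> (a + t *\<^sub>R p) = \<phi> a + s *\<^sub>R p'"
      by (auto simp: Qset_iff)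
    then show "p' = time_normalize e w"
      using we by (auto simp: w time_normalize_def)
  qed
qed

lemma continuous_on_if_locally_eq_continuous:
  assumes "\<And>x. x \<in> S \<Longrightarrow> \<exists>g. isCont g x \<and> (\<forall>\<^sub>F y in nhds x. y \<in> S \<longrightarrow> f y = g y)"
  shows "continuous_on S f"
  unfolding continuous_on_eq_continuous_within
proof
  fix x
  assume x: "x \<in> S"
  then obtain g where g: "isCont g x" and eq: "\<forall>\<^sub>F y in nhds x. y \<in> S \<longrightarrow> f y = g y"
    using assms by blast
  have "f x = g x"
    using eventually_nhds_x_imp_x[OF eq] x by blast
  moreover have "\<forall>\<^sub>F y in at x within S. g y = f y"
    using eq by (auto simp: eventually_at_filter elim: eventually_mono)
  ultimately show "continuous (at x within S) f"
    using continuous_within_subset[OF g subset_UNIV]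
    by (auto simp: continuous_within intro: Lim_transform_eventually)
qed

theorem lemma4p2:
  fixes e :: "'n::finite" and \<phi> :: "real^'n \<Rightarrow> real^'n"
  assumes "CARD('n) \<ge> 4"
    and "continuous_on UNIV \<phi>"
    and "coherency_preserver e \<phi>"
    and "\<not> degenerate e \<phi>"
  shows "continuous_on (UNIV \<times> Qset e) (\<lambda>(a, p). varphi e \<phi> a p)"
proof (rule continuous_on_if_locally_eq_continuous, clarify)
  fix a0 p0
  assume p0: "p0 \<in> Qset e"
  obtain t where t: "\<phi> (a0 + t *\<^sub>R p0) \<noteq> \<phi> a0"
    using nonconstant_on_null_line[OF assms(2-4) p0] by blast
  define W where "W z = \<phi> (fst z + t *\<^sub>R snd z) - \<phi> (fst z)" for z
  have \<phi>: "isCont \<phi> x" for x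
    using assms(2) by (simp add: continuous_on_eq_continuous_at)
  have W: "isCont W z" for z
    unfolding W_def by (intro continuous_intros isCont_o2[OF _ \<phi>])
  have "W (a0, p0) $ e \<noteq> 0"
    using null_secant_time_component_nonzero[OF assms(3) _ t] p0 by (simp add: W_def Qset_iff)
  then have "\<forall>\<^sub>F z in nhds (a0, p0). W z $ e \<noteq> 0"
    unfolding eventually_nhds_conv_at
    using tendsto_imp_eventually_ne[OF tendsto_vec_nth[OF W[unfolded isCont_def]]] by simp
  then have "\<forall>\<^sub>F z in nhds (a0, p0).
      z \<in> UNIV \<times> Qset e \<longrightarrow> (\<lambda>(a, p). varphi e \<phi> a p) z = time_normalize e (W z)"
    by eventually_elim (auto intro!: varphi_eq_time_normalize[OF assms(3)] simp: W_def)
  moreover have "isCont (\<lambda>z. time_normalize e (W z)) (a0, p0)"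
    using W \<open>W (a0, p0) $ e \<noteq> 0\<close> unfolding time_normalize_def
    by (intro continuous_intros) auto
  ultimately show "\<exists>g. isCont g (a0, p0) \<and>
      (\<forall>\<^sub>F z in nhds (a0, p0). z \<in> UNIV \<times> Qset e \<longrightarrow> (\<lambda>(a, p). varphi e \<phi> a p) z = g z)"
    by blast
qed

end
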